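(* Let $n\in\mathbb{N}^*$, $\mu>0$, $\lambda>0$, and let $n_\mu(dt)=\frac{\mu^n}{(n-1)!}t^{n-1}e^{-\mu t}\mathbf{1}_{t>0}\,dt$ be the gamma law. Let $(C_i)_{i\ge1}$ be i.i.d. copies of a random variable $C$ with $\mathbb{P}(C>0)=1$ and $\mathbb{E}[C^2]<\infty$, $D_k=C_1+\dots+C_k$, and $L(s)=\mathbb{E}[e^{-sC}]$. Then $$\sum_{k\ge1}\mathbb{E}\Big[e^{-\lambda D_k}\int_0^{D_k}e^{\lambda t}n_\mu(dt)\Big]=\begin{cases}\dfrac{\mu^n}{(\mu-\lambda)^n}\Big(\dfrac{L(\lambda)}{1-L(\lambda)}-\displaystyle\sum_{i=0}^{n-1}\frac{(\mu-\lambda)^i}{i!}(-1)^i\Big(\frac{L}{1-L}\Big)^{(i)}(\mu)\Big) & \text{if }\lambda\ne\mu,\\[2ex] \dfrac{\mu^n}{n!}(-1)^n\Big(\dfrac{L}{1-L}\Big)^{(n)}(\mu) & \text{if }\lambda=\mu,\end{cases}$$ and $$\sum_{k\ge1}k\,\mathbb{E}\Big[e^{-\lambda D_k}\int_0^{D_k}e^{\lambda t}n_\mu(dt)\Big]=\begin{cases}\dfrac{\mu^n}{(\mu-\lambda)^n}\Big(\dfrac{L(\lambda)}{(1-L(\lambda))^2}-\displaystyle\sum_{i=0}^{n-1}\frac{(\mu-\lambda)^i}{i!}(-1)^i\Big(\frac{L}{(1-L)^2}\Big)^{(i)}(\mu)\Big) & \text{if }\lambda\ne\mu,\\[2ex]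 \dfrac{\mu^n}{n!}(-1)^n\Big(\dfrac{L}{(1-L)^2}\Big)^{(n)}(\mu) & \text{if }\lambda=\mu,\end{cases}$$ where $F^{(i)}$ denotes the $i$-th derivative of a function $F$. *)

theory Defs
  imports "HOL-Probability.Probability"
begin

definition gamma_density :: "nat \<Rightarrow> real \<Rightarrow> real \<Rightarrow> real" where
  "gamma_density n mu t = (if t > 0 then mu ^ n / fact (n - 1) * t ^ (n - 1) * exp (- mu * t) else 0)"

definition laplace_rv :: "'a measure \<Rightarrow> ('a \<Rightarrow> real) \<Rightarrow> real \<Rightarrow> real" where
  "laplace_rv M C s = (\<integral>\<omega>. exp (- s * C \<omega>) \<partial>M)"

end

theory Submission
  imports Defs
begin

text \<open>
  Write D_k = C_1 + ... + C_k and a = mu - lam. Integrating the gamma density gives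
  exp(-lam x) int_0^x exp(lam t) n_mu(dt) = mu^n / a^n (exp(-lam x) - sum_(i<n) a^i / i! x^i exp(-mu x))
  for a ~= 0, and mu^n / n! x^n exp(-mu x) for a = 0, so every term of both series is a linear
  combination of the moments E[D_k^i exp(-s D_k)] at s = lam and s = mu. By independence
  E[exp(-s D_k)] = L(s)^k, and differentiating under the integral sign gives
  E[D_k^i exp(-s D_k)] = (-1)^i (L^k)^(i)(s). Summed over k with weight 1 or k, the series
  sum L^k and sum k L^k are L/(1-L) and L/(1-L)^2, and they may be differentiated termwise:
  x^i exp(-s x) <= (2i/s)^i exp(-s x/2) bounds the moments by the geometric sequence
  (2i/s)^i L(s/2)^k, and L(s/2) < 1 because C > 0 almost surely.
\<close>

lemma power_le_exp:
  fixes x :: real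
  assumes "0 \<le> x"
  shows "x ^ j \<le> real j ^ j * exp x"
proof (cases "j = 0")
  case False
  have "x ^ j = real j ^ j * (x / real j) ^ j" using False by (simp add: power_divide)
  also have "(x / real j) ^ j \<le> (1 + x / real j) ^ j"
    using assms by (intro power_mono) auto
  also have "\<dots> \<le> exp x" using False assms by (intro exp_ge_one_plus_x_over_n_power_n) auto
  finally show ?thesis by (simp add: mult_left_mono)
qed (use assms in simp)

lemma power_mult_exp_le:
  fixes x s :: real
  assumes "0 \<le> x" "0 < s"
  shows "x ^ j * exp (- s * x) \<le> real j ^ j / s ^ j"
proof -
  have "s ^ j * (x ^ j * exp (- s * x)) = (s * x) ^ j * exp (- s * x)"
    by (simp add: power_mult_distrib)
  also have "\<dots> \<le> real j ^ j * exp (s * x) * exp (- s * x)"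
    using assms by (intro mult_right_mono power_le_exp) auto
  also have "\<dots> = real j ^ j" by (simp flip: exp_add)
  finally show ?thesis using assms by (simp add: field_simps)
qed

lemma abs_exp_diff_le:
  fixes u v :: real
  shows "\<bar>exp u - exp v\<bar> \<le> \<bar>u - v\<bar> * exp (max u v)"
proof -
  have *: "exp b - exp a \<le> (b - a) * exp b" if "a \<le> b" for a b :: real
  proof -
    have "1 - (b - a) \<le> exp (a - b)" using exp_ge_add_one_self[of "a - b"] by linarith
    hence "exp b * (1 - (b - a)) \<le> exp b * exp (a - b)" by (intro mult_left_mono) auto
    thus ?thesis by (simp add: algebra_simps flip: exp_add)
  qed
  show ?thesis using *[of u v] *[of v u] by (cases "u \<le> v") (auto simp: max_def)
qed

lemma difference_quotient_power_mult_exp_le: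
  fixes y s h :: real
  assumes y: "0 \<le> y" and s: "0 < s" and h: "\<bar>h\<bar> < s / 2" "h \<noteq> 0"
  shows "\<bar>y ^ j * ((exp (- (s + h) * y) - exp (- s * y)) / h)\<bar>
           \<le> real (Suc j) ^ Suc j / (s / 2) ^ Suc j"
proof -
  have "s / 2 \<le> s + h" "s / 2 \<le> s" using s h by auto
  hence "s / 2 * y \<le> (s + h) * y" "s / 2 * y \<le> s * y"
    using y by (blast intro: mult_right_mono)+
  hence "- (s + h) * y \<le> - (s / 2) * y" "- s * y \<le> - (s / 2) * y"
    by (simp_all only: mult_minus_left neg_le_iff_le)
  hence "exp (max (- (s + h) * y) (- s * y)) \<le> exp (- (s / 2) * y)" by simp
  have "- (s + h) * y - - s * y = - (h * y)" by algebra
  hence "\<bar>- (s + h) * y - - s * y\<bar> = \<bar>h\<bar> * y" using y by (simp add: abs_mult)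
  hence "\<bar>exp (- (s + h) * y) - exp (- s * y)\<bar> \<le> \<bar>h\<bar> * y * exp (max (- (s + h) * y) (- s * y))"
    using abs_exp_diff_le[of "- (s + h) * y" "- s * y"] by simp
  also have "\<dots> \<le> \<bar>h\<bar> * y * exp (- (s / 2) * y)"
    using y \<open>exp (max _ _) \<le> _\<close> by (intro mult_left_mono) auto
  finally have "\<bar>exp (- (s + h) * y) - exp (- s * y)\<bar> \<le> \<bar>h\<bar> * y * exp (- (s / 2) * y)" .
  hence "\<bar>(exp (- (s + h) * y) - exp (- s * y)) / h\<bar> \<le> y * exp (- (s / 2) * y)"
    using h by (simp add: abs_divide divide_le_eq mult_ac)
  hence "\<bar>y ^ j * ((exp (- (s + h) * y) - exp (- s * y)) / h)\<bar> \<le> y ^ j * (y * exp (- (s / 2) * y))"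
    unfolding abs_mult abs_of_nonneg[OF zero_le_power[OF y]]
    using y by (intro mult_left_mono) auto
  also have "\<dots> = y ^ Suc j * exp (- (s / 2) * y)" by simp
  also have "\<dots> \<le> real (Suc j) ^ Suc j / (s / 2) ^ Suc j"
    using y s by (intro power_mult_exp_le) auto
  finally show ?thesis .
qed

context finite_measure
begin

lemma integrable_power_mult_exp:
  fixes Y :: "'a \<Rightarrow> real"
  assumes [measurable]: "Y \<in> borel_measurable M" and Y: "AE \<omega> in M. 0 \<le> Y \<omega>" and s: "0 < s"
  shows "integrable M (\<lambda>\<omega>. Y \<omega> ^ j * exp (- s * Y \<omega>))"
proof (rule integrable_const_bound[where B = "real j ^ j / s ^ j"])
  show "AE \<omega> in M. norm (Y \<omega> ^ j * exp (- s * Y \<omega>)) \<le> real j ^ j / s ^ j"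
    using Y by eventually_elim (use s power_mult_exp_le in auto)
qed measurable

lemma tendsto_integral_difference_quotient_power_mult_exp:
  fixes Y :: "'a \<Rightarrow> real"
  assumes [measurable]: "Y \<in> borel_measurable M" and Y: "AE \<omega> in M. 0 \<le> Y \<omega>" and s: "0 < s"
  shows "((\<lambda>h. \<integral>\<omega>. Y \<omega> ^ j * ((exp (- (s + h) * Y \<omega>) - exp (- s * Y \<omega>)) / h) \<partial>M)
           \<longlongrightarrow> (\<integral>\<omega>. - (Y \<omega> ^ Suc j * exp (- s * Y \<omega>)) \<partial>M)) (at 0 within {- s / 2 <..< s / 2})"
proof -
  define C where "C = real (Suc j) ^ Suc j / (s / 2) ^ Suc j"
  let ?q = "\<lambda>h \<omega>. Y \<omega> ^ j * ((exp (- (s + h) * Y \<omega>) - exp (- s * Y \<omega>)) / h)"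
  have pointwise: "((\<lambda>h. ?q h \<omega>) \<longlongrightarrow> - (Y \<omega> ^ Suc j * exp (- s * Y \<omega>))) (at 0)" for \<omega>
  proof -
    have "((\<lambda>t. exp (- t * Y \<omega>)) has_real_derivative exp (- s * Y \<omega>) * (- Y \<omega>)) (at s)"
      by (auto intro!: derivative_eq_intros)
    hence "((\<lambda>h. (exp (- (s + h) * Y \<omega>) - exp (- s * Y \<omega>)) / h)
             \<longlongrightarrow> exp (- s * Y \<omega>) * (- Y \<omega>)) (at 0)"
      unfolding DERIV_def by (simp add: mult_ac)
    from tendsto_mult_left[OF this, of "Y \<omega> ^ j"] show ?thesis by (simp add: mult_ac)
  qed
  show ?thesis
  proof (subst tendsto_at_iff_sequentially, intro allI impI)
    fix H :: "nat \<Rightarrow> real" assume H: "\<forall>i. H i \<in> {- s / 2 <..< s / 2} - {0}" "H \<longlonglongrightarrow> 0"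
    have "(\<lambda>i. \<integral>\<omega>. ?q (H i) \<omega> \<partial>M) \<longlonglongrightarrow> (\<integral>\<omega>. - (Y \<omega> ^ Suc j * exp (- s * Y \<omega>)) \<partial>M)"
    proof (rule integral_dominated_convergence[where w = "\<lambda>_. C"])
      show "AE \<omega> in M. norm (?q (H i) \<omega>) \<le> C" for i
      proof -
        have h: "\<bar>H i\<bar> < s / 2" "H i \<noteq> 0" using H(1)[rule_format, of i] by auto
        from Y show ?thesis unfolding C_def real_norm_def
          by eventually_elim (rule difference_quotient_power_mult_exp_le[OF _ s h])
      qed
      show "AE \<omega> in M. (\<lambda>i. ?q (H i) \<omega>) \<longlonglongrightarrow> - (Y \<omega> ^ Suc j * exp (- s * Y \<omega>))"
        using pointwise H unfolding tendsto_at_iff_sequentially by (auto simp: comp_def)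
      show "(\<lambda>\<omega>. - (Y \<omega> ^ Suc j * exp (- s * Y \<omega>))) \<in> borel_measurable M"
        "(\<lambda>\<omega>. ?q (H i) \<omega>) \<in> borel_measurable M" for i
        by measurable
    qed simp
    thus "((\<lambda>h. \<integral>\<omega>. ?q h \<omega> \<partial>M) \<circ> H) \<longlonglongrightarrow> (\<integral>\<omega>. - (Y \<omega> ^ Suc j * exp (- s * Y \<omega>)) \<partial>M)"
      by (simp add: comp_def)
  qed
qed

lemma has_real_derivative_integral_power_mult_exp:
  fixes Y :: "'a \<Rightarrow> real"
  assumes Y_meas [measurable]: "Y \<in> borel_measurable M" and Y: "AE \<omega> in M. 0 \<le> Y \<omega>"
    and s: "0 < s"
  shows "((\<lambda>s. \<integral>\<omega>. Y \<omega> ^ j * exp (- s * Y \<omega>) \<partial>M) has_real_derivative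
           - (\<integral>\<omega>. Y \<omega> ^ Suc j * exp (- s * Y \<omega>) \<partial>M)) (at s)"
proof -
  define \<phi> where "\<phi> s = (\<integral>\<omega>. Y \<omega> ^ j * exp (- s * Y \<omega>) \<partial>M)" for s
  define T where "T = {- s / 2 <..< s / 2}"
  have quotient: "(\<integral>\<omega>. Y \<omega> ^ j * ((exp (- (s + h) * Y \<omega>) - exp (- s * Y \<omega>)) / h) \<partial>M)
                    = (\<phi> (s + h) - \<phi> s) / h" if "h \<in> T" for h
  proof -
    have "0 < s + h" using that by (auto simp: T_def)
    have diff: "\<phi> (s + h) - \<phi> s
             = (\<integral>\<omega>. Y \<omega> ^ j * exp (- (s + h) * Y \<omega>) - Y \<omega> ^ j * exp (- s * Y \<omega>) \<partial>M)"
      unfolding \<phi>_def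
      using integrable_power_mult_exp [OF Y_meas Y \<open>0 < s + h\<close>]
            integrable_power_mult_exp [OF Y_meas Y s]
      by (rule Bochner_Integration.integral_diff [symmetric])
    show ?thesis unfolding diff by (simp add: right_diff_distrib)
  qed
  have "eventually (\<lambda>h. (\<integral>\<omega>. Y \<omega> ^ j * ((exp (- (s + h) * Y \<omega>) - exp (- s * Y \<omega>)) / h) \<partial>M)
                        = (\<phi> (s + h) - \<phi> s) / h) (at 0 within T)"
    unfolding eventually_at_filter by (intro always_eventually allI impI quotient)
  from tendsto_cong [THEN iffD1, OF this
         tendsto_integral_difference_quotient_power_mult_exp [OF Y_meas Y s, of j, folded T_def]]
  have "((\<lambda>h. (\<phi> (s + h) - \<phi> s) / h) \<longlongrightarrow> - (\<integral>\<omega>. Y \<omega> ^ Suc j * exp (- s * Y \<omega>) \<partial>M))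
          (at 0 within T)"
    by simp
  moreover have "at 0 within T = at 0" using s by (intro at_within_open) (auto simp: T_def)
  ultimately show ?thesis unfolding DERIV_def \<phi>_def by simp
qed

end

definition gamma_kernel :: "nat \<Rightarrow> real \<Rightarrow> real \<Rightarrow> real \<Rightarrow> real" where
  "gamma_kernel n mu lam x =
     (if lam \<noteq> mu then mu ^ n / (mu - lam) ^ n *
        (exp (- lam * x) - (\<Sum>i<n. (mu - lam) ^ i / fact i * (x ^ i * exp (- mu * x))))
      else mu ^ n / fact n * (x ^ n * exp (- mu * x)))"

lemma has_real_derivative_exp_mult_exp_partial_sum:
  fixes a :: real
  shows "((\<lambda>t. exp (- a * t) * (\<Sum>i<Suc m. (a * t) ^ i / fact i)) has_real_derivative
           - a * exp (- a * t) * (a * t) ^ m / fact m) (at t)"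
proof (induction m)
  case 0
  show ?case by (auto intro!: derivative_eq_intros)
next
  case (Suc m)
  have split: "(\<lambda>t. exp (- a * t) * (\<Sum>i<Suc (Suc m). (a * t) ^ i / fact i)) =
      (\<lambda>t. exp (- a * t) * (\<Sum>i<Suc m. (a * t) ^ i / fact i)
           + exp (- a * t) * ((a * t) ^ Suc m / fact (Suc m)))"
    by (simp add: algebra_simps)
  have "((\<lambda>t. exp (- a * t) * ((a * t) ^ Suc m / fact (Suc m))) has_real_derivative
          exp (- a * t) * (- a) * ((a * t) ^ Suc m / fact (Suc m))
          + exp (- a * t) * (real (Suc m) * (a * t) ^ m * a / fact (Suc m))) (at t)"
    by (auto intro!: derivative_eq_intros simp del: power_Suc fact_Suc
             simp: diff_divide_distrib mult_ac)
  from DERIV_add[OF Suc.IH this]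
  have "((\<lambda>t. exp (- a * t) * (\<Sum>i<Suc (Suc m). (a * t) ^ i / fact i)) has_real_derivative
          - a * exp (- a * t) * (a * t) ^ m / fact m
          + (exp (- a * t) * (- a) * ((a * t) ^ Suc m / fact (Suc m))
             + exp (- a * t) * (real (Suc m) * (a * t) ^ m * a / fact (Suc m)))) (at t)"
    unfolding split .
  moreover have "- a * exp (- a * t) * (a * t) ^ m / fact m
      + (exp (- a * t) * (- a) * ((a * t) ^ Suc m / fact (Suc m))
         + exp (- a * t) * (real (Suc m) * (a * t) ^ m * a / fact (Suc m)))
      = - a * exp (- a * t) * (a * t) ^ Suc m / fact (Suc m)"
    by (simp add: field_simps del: fact_Suc) (simp add: fact_Suc algebra_simps)
  ultimately show ?case by (simp only:)
qed

lemma integral_power_mult_exp_Icc: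
  fixes a x :: real
  assumes "a \<noteq> 0" "0 \<le> x"
  shows "(\<integral>t. t ^ m * exp (- a * t) * indicator {0..x} t \<partial>lborel)
           = fact m / a ^ Suc m * (1 - exp (- a * x) * (\<Sum>i<Suc m. (a * x) ^ i / fact i))"
proof -
  define P where "P t = (\<Sum>i<Suc m. (a * t) ^ i / fact i)" for t
  define F where "F t = - fact m / a ^ Suc m * (exp (- a * t) * P t)" for t
  have "(\<integral>t. t ^ m * exp (- a * t) * indicator {0..x} t \<partial>lborel) = F x - F 0"
  proof (rule integral_FTC_Icc_real[OF \<open>0 \<le> x\<close>])
    fix t
    have "(F has_real_derivative
            - fact m / a ^ Suc m * (- a * exp (- a * t) * (a * t) ^ m / fact m)) (at t)"
      unfolding F_def P_def by (intro DERIV_cmult has_real_derivative_exp_mult_exp_partial_sum)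
    thus "(F has_real_derivative t ^ m * exp (- a * t)) (at t)"
      using \<open>a \<noteq> 0\<close> by (simp add: field_simps power_mult_distrib)
  qed (intro continuous_intros)
  moreover have "P 0 = 1" unfolding P_def by (induction m) auto
  ultimately show ?thesis unfolding P_def [symmetric] by (simp add: F_def algebra_simps)
qed

lemma exp_mult_exp_mult_exp_partial_sum:
  fixes x lam mu :: real
  shows "exp (- lam * x) * (exp (- (mu - lam) * x) * (\<Sum>i<n. ((mu - lam) * x) ^ i / fact i))
           = (\<Sum>i<n. (mu - lam) ^ i / fact i * (x ^ i * exp (- mu * x)))"
proof -
  have exp_lam_mu: "exp (- lam * x) * exp (- (mu - lam) * x) = exp (- mu * x)"
    by (simp add: algebra_simps flip: exp_add)
  show ?thesis unfolding sum_distrib_left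
    by (intro sum.cong refl)
       (simp only: mult.assoc [symmetric] exp_lam_mu, simp add: power_mult_distrib mult_ac)
qed

lemma set_integral_exp_mult_gamma_density:
  "(\<integral>t\<in>{0..x}. exp (lam * t) * gamma_density (Suc m) mu t \<partial>lborel)
     = mu ^ Suc m / fact m * (\<integral>t. t ^ m * exp (- (mu - lam) * t) * indicator {0..x} t \<partial>lborel)"
proof -
  have "(\<integral>t\<in>{0..x}. exp (lam * t) * gamma_density (Suc m) mu t \<partial>lborel)
          = (\<integral>t. mu ^ Suc m / fact m * (t ^ m * exp (- (mu - lam) * t) * indicator {0..x} t) \<partial>lborel)"
    unfolding set_lebesgue_integral_def
  proof (rule integral_cong_AE)
    show "AE t in lborel. indicator {0..x} t *\<^sub>R (exp (lam * t) * gamma_density (Suc m) mu t)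
            = mu ^ Suc m / fact m * (t ^ m * exp (- (mu - lam) * t) * indicator {0..x} t)"
      using AE_lborel_singleton[of 0]
      by eventually_elim
         (auto simp: gamma_density_def indicator_def algebra_simps simp flip: exp_add)
  qed (auto simp: gamma_density_def)
  thus ?thesis by simp
qed

lemma exp_mult_set_integral_gamma_density:
  fixes x lam mu :: real
  assumes "1 \<le> n"
  shows "exp (- lam * x) * (\<integral>t\<in>{0..x}. exp (lam * t) * gamma_density n mu t \<partial>lborel)
           = (if 0 \<le> x then gamma_kernel n mu lam x else 0)"
proof (cases "0 \<le> x")
  case False
  thus ?thesis by (simp add: set_lebesgue_integral_def)
next
  case x: True
  obtain m where n: "n = Suc m" using \<open>1 \<le> n\<close> by (cases n) auto
  define a where "a = mu - lam"
  have integral: "(\<integral>t\<in>{0..x}. exp (lam * t) * gamma_density n mu t \<partial>lborel)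
          = mu ^ n / fact m * (\<integral>t. t ^ m * exp (- a * t) * indicator {0..x} t \<partial>lborel)"
    unfolding n a_def by (rule set_integral_exp_mult_gamma_density)
  show ?thesis
  proof (cases "lam = mu")
    case True
    hence "(\<integral>t. t ^ m * exp (- a * t) * indicator {0..x} t \<partial>lborel)
             = (\<integral>t. t ^ m * indicator {0..x} t \<partial>lborel)"
      by (simp add: a_def)
    also have "\<dots> = x ^ n / n" using integral_power[OF x, of m] by (simp add: n)
    finally have "(\<integral>t\<in>{0..x}. exp (lam * t) * gamma_density n mu t \<partial>lborel) = mu ^ n / fact n * x ^ n"
      unfolding integral by (simp add: n fact_Suc del: of_nat_Suc)
    with True x show ?thesis by (simp add: gamma_kernel_def mult_ac)
  next
    case False
    hence "a \<noteq> 0" by (simp add: a_def)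
    define P where "P = (\<Sum>i<n. (a * x) ^ i / fact i)"
    have "(\<integral>t. t ^ m * exp (- a * t) * indicator {0..x} t \<partial>lborel) = fact m / a ^ n * (1 - exp (- a * x) * P)"
      unfolding n P_def by (rule integral_power_mult_exp_Icc[OF \<open>a \<noteq> 0\<close> x])
    hence set_integral: "(\<integral>t\<in>{0..x}. exp (lam * t) * gamma_density n mu t \<partial>lborel)
                            = mu ^ n / a ^ n * (1 - exp (- a * x) * P)"
      unfolding integral by simp
    have "exp (- lam * x) * (\<integral>t\<in>{0..x}. exp (lam * t) * gamma_density n mu t \<partial>lborel)
             = mu ^ n / a ^ n * (exp (- lam * x) - exp (- lam * x) * (exp (- a * x) * P))"
      unfolding set_integral by (simp add: algebra_simps)
    also have "exp (- lam * x) * (exp (- a * x) * P) = (\<Sum>i<n. a ^ i / fact i * (x ^ i * exp (- mu * x)))"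
      unfolding P_def a_def by (rule exp_mult_exp_mult_exp_partial_sum)
    finally show ?thesis using False x by (simp add: gamma_kernel_def a_def)
  qed
qed

lemma borel_measurable_gamma_kernel [measurable]: "gamma_kernel n mu lam \<in> borel_measurable borel"
  unfolding gamma_kernel_def [abs_def] by measurable

locale positive_iid_sequence = prob_space M for M :: "'a measure" +
  fixes X :: "nat \<Rightarrow> 'a \<Rightarrow> real"
  assumes measurable_X [measurable]: "\<And>i. X i \<in> borel_measurable M"
    and indep_X: "indep_vars (\<lambda>_. borel) X UNIV"
    and identically_distributed: "\<And>i. distr M borel (X i) = distr M borel (X 0)"
    and AE_X0_pos: "AE \<omega> in M. 0 < X 0 \<omega>"
begin

abbreviation L :: "real \<Rightarrow> real" where "L \<equiv> laplace_rv M (X 0)"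

abbreviation walk :: "nat \<Rightarrow> 'a \<Rightarrow> real" where "walk k \<omega> \<equiv> \<Sum>i<k. X i \<omega>"

lemma AE_X_pos: "AE \<omega> in M. \<forall>i. 0 < X i \<omega>"
proof -
  have "AE \<omega> in M. 0 < X i \<omega>" for i
  proof -
    have "AE x in distr M borel (X 0). 0 < x" using AE_X0_pos by (subst AE_distr_iff) auto
    hence "AE x in distr M borel (X i). 0 < x" by (simp only: identically_distributed [of i])
    thus ?thesis by (subst (asm) AE_distr_iff) auto
  qed
  thus ?thesis by (simp add: AE_all_countable)
qed

lemma AE_walk_nonneg: "AE \<omega> in M. 0 \<le> walk k \<omega>"
  using AE_X_pos by eventually_elim (simp add: less_imp_le sum_nonneg)

lemma integrable_exp_X:
  assumes "0 < s"
  shows "integrable M (\<lambda>\<omega>. exp (- s * X i \<omega>))"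
proof -
  have "AE \<omega> in M. 0 \<le> X i \<omega>" using AE_X_pos by eventually_elim (simp add: less_imp_le)
  from integrable_power_mult_exp[OF measurable_X this assms, of 0] show ?thesis by simp
qed

lemma integral_exp_X: "(\<integral>\<omega>. exp (- s * X i \<omega>) \<partial>M) = L s"
proof -
  have "(\<integral>\<omega>. exp (- s * X i \<omega>) \<partial>M) = (\<integral>x. exp (- s * x) \<partial>distr M borel (X i))"
    by (simp add: integral_distr)
  also have "\<dots> = (\<integral>x. exp (- s * x) \<partial>distr M borel (X 0))"
    by (simp only: identically_distributed [of i])
  finally show ?thesis by (simp add: integral_distr laplace_rv_def)
qed

lemma laplace_nonneg: "0 \<le> L s"
  unfolding laplace_rv_def by (intro integral_nonneg_AE) auto

lemma laplace_less_one:
  assumes "0 < s"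
  shows "L s < 1"
proof -
  have "(\<integral>\<omega>. exp (- s * X 0 \<omega>) \<partial>M) < (\<integral>\<omega>. 1 \<partial>M)"
  proof (rule integral_less_AE_space)
    show "AE \<omega> in M. exp (- s * X 0 \<omega>) < 1"
      using AE_X0_pos by eventually_elim (use assms in simp)
  qed (use assms integrable_exp_X in \<open>auto simp: emeasure_space_1\<close>)
  thus ?thesis by (simp add: laplace_rv_def prob_space)
qed

definition walk_moment :: "nat \<Rightarrow> nat \<Rightarrow> real \<Rightarrow> real" where
  "walk_moment k j s = (\<integral>\<omega>. walk k \<omega> ^ j * exp (- s * walk k \<omega>) \<partial>M)"

lemma integrable_walk_moment:
  "0 < s \<Longrightarrow> integrable M (\<lambda>\<omega>. walk k \<omega> ^ j * exp (- s * walk k \<omega>))"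
  by (intro integrable_power_mult_exp AE_walk_nonneg) auto

lemma walk_moment_nonneg: "0 \<le> walk_moment k j s"
  unfolding walk_moment_def using AE_walk_nonneg[of k] by (intro integral_nonneg_AE) auto

lemma walk_moment_zero:
  assumes s: "0 < s"
  shows "walk_moment k 0 s = L s ^ k"
proof -
  have "walk_moment k 0 s = (\<integral>\<omega>. (\<Prod>i<k. exp (- s * X i \<omega>)) \<partial>M)"
    unfolding walk_moment_def by (simp add: exp_sum sum_distrib_left flip: sum_negf)
  also have "\<dots> = (\<Prod>i<k. \<integral>\<omega>. exp (- s * X i \<omega>) \<partial>M)"
  proof (rule indep_vars_lebesgue_integral)
    show "indep_vars (\<lambda>_. borel) (\<lambda>i \<omega>. exp (- s * X i \<omega>)) {..<k}"
      by (rule indep_vars_compose2[where M' = "\<lambda>_. borel"])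
         (auto intro: indep_vars_subset[OF indep_X])
    show "integrable M (\<lambda>\<omega>. exp (- s * X i \<omega>))" for i
      using s by (rule integrable_exp_X)
  qed simp
  finally show ?thesis using integral_exp_X[of s] by simp
qed

lemma walk_moment_le:
  assumes s: "0 < s"
  shows "walk_moment k j s \<le> real j ^ j / (s / 2) ^ j * L (s / 2) ^ k"
proof -
  have "walk_moment k j s \<le> (\<integral>\<omega>. real j ^ j / (s / 2) ^ j * exp (- (s / 2) * walk k \<omega>) \<partial>M)"
    unfolding walk_moment_def
  proof (intro integral_mono_AE integrable_walk_moment s)
    show "integrable M (\<lambda>\<omega>. real j ^ j / (s / 2) ^ j * exp (- (s / 2) * walk k \<omega>))"
      using integrable_walk_moment[of "s / 2" k 0] s by simp
    show "AE \<omega> in M. walk k \<omega> ^ j * exp (- s * walk k \<omega>)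
                        \<le> real j ^ j / (s / 2) ^ j * exp (- (s / 2) * walk k \<omega>)"
      using AE_walk_nonneg[of k]
    proof eventually_elim
      case (elim \<omega>)
      have "walk k \<omega> ^ j * exp (- s * walk k \<omega>)
              = walk k \<omega> ^ j * exp (- (s / 2) * walk k \<omega>) * exp (- (s / 2) * walk k \<omega>)"
        by (simp add: mult.assoc flip: exp_add)
      also have "\<dots> \<le> real j ^ j / (s / 2) ^ j * exp (- (s / 2) * walk k \<omega>)"
        using elim s by (intro mult_right_mono power_mult_exp_le) auto
      finally show ?case .
    qed
  qed
  also have "\<dots> = real j ^ j / (s / 2) ^ j * walk_moment k 0 (s / 2)"
    by (simp add: walk_moment_def)
  finally show ?thesis using s by (simp add: walk_moment_zero)
qed

lemma walk_moment_antimono: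
  assumes "0 < s" "s \<le> t"
  shows "walk_moment k j t \<le> walk_moment k j s"
  unfolding walk_moment_def
proof (intro integral_mono_AE integrable_walk_moment)
  show "AE \<omega> in M. walk k \<omega> ^ j * exp (- t * walk k \<omega>) \<le> walk k \<omega> ^ j * exp (- s * walk k \<omega>)"
    using AE_walk_nonneg[of k]
    by eventually_elim (use assms in \<open>auto intro!: mult_left_mono mult_right_mono\<close>)
qed (use assms in auto)

lemma has_real_derivative_walk_moment:
  "0 < s \<Longrightarrow> (walk_moment k j has_real_derivative - walk_moment k (Suc j) s) (at s)"
  unfolding walk_moment_def [abs_def]
  by (intro has_real_derivative_integral_power_mult_exp AE_walk_nonneg) auto

lemma integral_exp_mult_set_integral_gamma_density:
  assumes "1 \<le> n"
  shows "(\<integral>\<omega>. exp (- lam * walk k \<omega>) *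
            (\<integral>t\<in>{0..walk k \<omega>}. exp (lam * t) * gamma_density n mu t \<partial>lborel) \<partial>M)
         = (\<integral>\<omega>. gamma_kernel n mu lam (walk k \<omega>) \<partial>M)"
proof -
  have "(\<integral>\<omega>. exp (- lam * walk k \<omega>) *
            (\<integral>t\<in>{0..walk k \<omega>}. exp (lam * t) * gamma_density n mu t \<partial>lborel) \<partial>M)
        = (\<integral>\<omega>. (if 0 \<le> walk k \<omega> then gamma_kernel n mu lam (walk k \<omega>) else 0) \<partial>M)"
    by (simp only: exp_mult_set_integral_gamma_density [OF assms])
  also have "\<dots> = (\<integral>\<omega>. gamma_kernel n mu lam (walk k \<omega>) \<partial>M)"
    using AE_walk_nonneg [of k] by (intro integral_cong_AE) auto
  finally show ?thesis .
qed

lemma integral_gamma_kernel_walk: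
  assumes "0 < mu" "0 < lam"
  shows "(\<integral>\<omega>. gamma_kernel n mu lam (walk k \<omega>) \<partial>M) =
    (if lam \<noteq> mu then mu ^ n / (mu - lam) ^ n * (walk_moment k 0 lam -
        (\<Sum>i<n. (mu - lam) ^ i / fact i * walk_moment k i mu))
     else mu ^ n / fact n * walk_moment k n mu)"
proof (cases "lam = mu")
  case False
  have exp_lam: "integrable M (\<lambda>\<omega>. exp (- lam * walk k \<omega>))"
    using integrable_walk_moment[OF \<open>0 < lam\<close>, of k 0] by simp
  have terms: "integrable M (\<lambda>\<omega>. (mu - lam) ^ i / fact i * (walk k \<omega> ^ i * exp (- mu * walk k \<omega>)))"
    for i using assms by (intro integrable_mult_right integrable_walk_moment)
  have "(\<integral>\<omega>. gamma_kernel n mu lam (walk k \<omega>) \<partial>M) = (\<integral>\<omega>. mu ^ n / (mu - lam) ^ n *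
          (exp (- lam * walk k \<omega>) -
           (\<Sum>i<n. (mu - lam) ^ i / fact i * (walk k \<omega> ^ i * exp (- mu * walk k \<omega>)))) \<partial>M)"
    using False by (simp add: gamma_kernel_def)
  also have "\<dots> = mu ^ n / (mu - lam) ^ n * ((\<integral>\<omega>. exp (- lam * walk k \<omega>) \<partial>M) -
          (\<Sum>i<n. (mu - lam) ^ i / fact i * (\<integral>\<omega>. walk k \<omega> ^ i * exp (- mu * walk k \<omega>) \<partial>M)))"
    by (simp only: integral_mult_right_zero Bochner_Integration.integral_diff[OF exp_lam
          Bochner_Integration.integrable_sum[OF terms]] Bochner_Integration.integral_sum[OF terms])
  finally show ?thesis using False by (simp add: walk_moment_def)
qed (simp add: gamma_kernel_def walk_moment_def)

context
  fixes w :: "nat \<Rightarrow> real"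
  assumes w_nonneg: "\<And>k. 0 \<le> w k" and w_le: "\<And>k. w k \<le> real (Suc k)"
begin

lemma summable_weighted_walk_moment:
  assumes s: "0 < s"
  shows "summable (\<lambda>k. w k * walk_moment (Suc k) j s)"
proof (rule summable_comparison_test')
  define C where "C = real j ^ j / (s / 2) ^ j"
  define r where "r = L (s / 2)"
  have r: "0 \<le> r" "r < 1" using s by (auto simp: r_def intro: laplace_nonneg laplace_less_one)
  show "summable (\<lambda>k. C * r * (real (Suc k) * r ^ k))"
    using geometric_deriv_sums[of r] r by (intro summable_mult) (auto simp: sums_iff)
  show "norm (w k * walk_moment (Suc k) j s) \<le> C * r * (real (Suc k) * r ^ k)" for k
  proof -
    have "norm (w k * walk_moment (Suc k) j s) = w k * walk_moment (Suc k) j s"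
      using w_nonneg[of k] walk_moment_nonneg by simp
    also have "\<dots> \<le> real (Suc k) * (C * r ^ Suc k)"
      using walk_moment_le[OF s, of "Suc k" j] w_le[of k] w_nonneg[of k] walk_moment_nonneg
      unfolding C_def [symmetric] r_def [symmetric] by (intro mult_mono) auto
    finally show ?thesis by (simp add: algebra_simps)
  qed
qed

lemma has_real_derivative_weighted_walk_moment:
  assumes s: "0 < s"
  shows "((\<lambda>s. \<Sum>k. w k * walk_moment (Suc k) j s) has_real_derivative
           - (\<Sum>k. w k * walk_moment (Suc k) (Suc j) s)) (at s)"
proof -
  define S where "S = {s / 2 <..}"
  have "((\<lambda>s. \<Sum>k. w k * walk_moment (Suc k) j s) has_field_derivative
          (\<Sum>k. w k * - walk_moment (Suc k) (Suc j) s)) (at s)"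
  proof (rule has_field_derivative_series'(2)[where S = S and x0 = s])
    show "((\<lambda>s. w k * walk_moment (Suc k) j s) has_field_derivative
             w k * - walk_moment (Suc k) (Suc j) t) (at t within S)" if "t \<in> S" for k t
    proof -
      have "0 < t" using that s by (simp add: S_def)
      from DERIV_cmult [OF has_real_derivative_walk_moment [OF this, of "Suc k" j], of "w k"]
      show ?thesis by (rule has_field_derivative_at_within)
    qed
    show "uniformly_convergent_on S (\<lambda>n t. \<Sum>k<n. w k * - walk_moment (Suc k) (Suc j) t)"
    proof (rule Weierstrass_m_test')
      show "summable (\<lambda>k. w k * walk_moment (Suc k) (Suc j) (s / 2))"
        using s by (intro summable_weighted_walk_moment) auto
      fix k t assume "t \<in> S"
      hence "walk_moment (Suc k) (Suc j) t \<le> walk_moment (Suc k) (Suc j) (s / 2)"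
        using s by (intro walk_moment_antimono) (auto simp: S_def)
      thus "norm (w k * - walk_moment (Suc k) (Suc j) t) \<le> w k * walk_moment (Suc k) (Suc j) (s / 2)"
        using w_nonneg[of k] walk_moment_nonneg[of "Suc k" "Suc j" t] by (simp add: mult_left_mono)
    qed
    show "convex S" by (simp add: S_def)
    show "s \<in> S" "s \<in> interior S" using s by (simp_all add: S_def interior_open)
    show "summable (\<lambda>k. w k * walk_moment (Suc k) j s)" by (rule summable_weighted_walk_moment[OF s])
  qed
  thus ?thesis
    using summable_weighted_walk_moment[OF s, of "Suc j"] by (simp add: suminf_minus)
qed

context
  fixes F :: "real \<Rightarrow> real"
  assumes F: "\<And>s. 0 < s \<Longrightarrow> (\<lambda>k. w k * L s ^ Suc k) sums F s"
begin

lemma deriv_iterate_eq_weighted_walk_moment: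
  "0 < s \<Longrightarrow> (deriv ^^ j) F s = (-1) ^ j * (\<Sum>k. w k * walk_moment (Suc k) j s)"
proof (induction j arbitrary: s)
  case 0
  thus ?case using F[OF 0] by (simp add: walk_moment_zero sums_iff del: power_Suc)
next
  case (Suc j)
  have "eventually (\<lambda>t. (deriv ^^ j) F t = (-1) ^ j * (\<Sum>k. w k * walk_moment (Suc k) j t)) (nhds s)"
    using eventually_nhds_in_open[of "{0<..}" s] Suc.prems
    by (auto elim!: eventually_mono intro: Suc.IH)
  moreover have "((\<lambda>t. (-1) ^ j * (\<Sum>k. w k * walk_moment (Suc k) j t)) has_real_derivative
                   (-1) ^ Suc j * (\<Sum>k. w k * walk_moment (Suc k) (Suc j) s)) (at s)"
    using DERIV_cmult[OF has_real_derivative_weighted_walk_moment[OF Suc.prems], of "(-1) ^ j"]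
    by simp
  ultimately have "((deriv ^^ j) F has_real_derivative
                     (-1) ^ Suc j * (\<Sum>k. w k * walk_moment (Suc k) (Suc j) s)) (at s)"
    by (subst DERIV_cong_ev[OF refl _ refl])
  thus ?case by (simp add: DERIV_imp_deriv)
qed

lemma weighted_walk_moment_sums:
  assumes "0 < s"
  shows "(\<lambda>k. w k * walk_moment (Suc k) j s) sums ((-1) ^ j * (deriv ^^ j) F s)"
  using summable_weighted_walk_moment[OF assms, of j]
  by (simp add: deriv_iterate_eq_weighted_walk_moment[OF assms] sums_iff mult.assoc [symmetric]
           flip: power_mult_distrib)

lemma weighted_gamma_kernel_sums:
  assumes mu: "0 < mu" and lam: "0 < lam"
  shows "(\<lambda>k. w k * (\<integral>\<omega>. gamma_kernel n mu lam (walk (Suc k) \<omega>) \<partial>M)) sums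
    (if lam \<noteq> mu then mu ^ n / (mu - lam) ^ n * (F lam -
        (\<Sum>i<n. (mu - lam) ^ i / fact i * (-1) ^ i * (deriv ^^ i) F mu))
     else mu ^ n / fact n * (-1) ^ n * (deriv ^^ n) F mu)"
proof (cases "lam = mu")
  case True
  have "(\<lambda>k. mu ^ n / fact n * (w k * walk_moment (Suc k) n mu))
          sums (mu ^ n / fact n * ((-1) ^ n * (deriv ^^ n) F mu))"
    by (intro sums_mult weighted_walk_moment_sums mu)
  with True show ?thesis by (simp add: integral_gamma_kernel_walk mu mult_ac del: sum.lessThan_Suc)
next
  case False
  have "(\<lambda>k. mu ^ n / (mu - lam) ^ n * (w k * walk_moment (Suc k) 0 lam -
            (\<Sum>i<n. (mu - lam) ^ i / fact i * (w k * walk_moment (Suc k) i mu))))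
          sums (mu ^ n / (mu - lam) ^ n * ((-1) ^ 0 * (deriv ^^ 0) F lam -
            (\<Sum>i<n. (mu - lam) ^ i / fact i * ((-1) ^ i * (deriv ^^ i) F mu))))"
    by (intro sums_mult sums_diff sums_sum weighted_walk_moment_sums mu lam)
  with False show ?thesis
    by (simp add: integral_gamma_kernel_walk mu lam mult_ac right_diff_distrib sum_distrib_left
             del: sum.lessThan_Suc)
qed

end

end

end

theorem mainTheorem7:
  fixes M :: "'a measure" and X :: "nat \<Rightarrow> 'a \<Rightarrow> real"
    and n :: nat and mu lam :: real
  assumes "prob_space M"
    and "n \<ge> 1" and "mu > 0" and "lam > 0"
    and meas: "\<And>i. X i \<in> borel_measurable M"
    and indep: "prob_space.indep_vars M (\<lambda>_. borel) X UNIV"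
    and ident: "\<And>i. distr M borel (X i) = distr M borel (X 0)"
    and pos: "AE \<omega> in M. X 0 \<omega> > 0"
    and sq: "integrable M (\<lambda>\<omega>. (X 0 \<omega>)\<^sup>2)"
  defines "g \<equiv> (\<lambda>k. \<integral>\<omega>. exp (- lam * (\<Sum>i<k. X i \<omega>)) *
                 (\<integral>t\<in>{0..(\<Sum>i<k. X i \<omega>)}. exp (lam * t) * gamma_density n mu t \<partial>lborel) \<partial>M)"
    and "F1 \<equiv> (\<lambda>s. laplace_rv M (X 0) s / (1 - laplace_rv M (X 0) s))"
    and "F2 \<equiv> (\<lambda>s. laplace_rv M (X 0) s / (1 - laplace_rv M (X 0) s)\<^sup>2)"
  shows "((\<lambda>k. g (Suc k)) sums
           (if lam \<noteq> mu then
              mu ^ n / (mu - lam) ^ n * (F1 lam -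
                (\<Sum>i<n. (mu - lam) ^ i / fact i * (-1) ^ i * (deriv ^^ i) F1 mu))
            else mu ^ n / fact n * (-1) ^ n * (deriv ^^ n) F1 mu)) \<and>
         ((\<lambda>k. real (Suc k) * g (Suc k)) sums
           (if lam \<noteq> mu then
              mu ^ n / (mu - lam) ^ n * (F2 lam -
                (\<Sum>i<n. (mu - lam) ^ i / fact i * (-1) ^ i * (deriv ^^ i) F2 mu))
            else mu ^ n / fact n * (-1) ^ n * (deriv ^^ n) F2 mu))"
proof -
  interpret positive_iid_sequence M X
    using assms(1) meas indep ident pos
    by (intro positive_iid_sequence.intro positive_iid_sequence_axioms.intro)
  have L: "0 \<le> L s" "L s < 1" if "0 < s" for s
    using that by (auto intro: laplace_nonneg laplace_less_one)
  have F1: "(\<lambda>k. 1 * L s ^ Suc k) sums F1 s" if "0 < s" for s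
    using sums_mult [OF geometric_sums, of "L s" "L s"] L [OF that] by (simp add: F1_def)
  have F2: "(\<lambda>k. real (Suc k) * L s ^ Suc k) sums F2 s" if "0 < s" for s
    using sums_mult [OF geometric_deriv_sums, of "L s" "L s"] L [OF that] by (simp add: F2_def mult_ac)
  have "g (Suc k) = (\<integral>\<omega>. gamma_kernel n mu lam (walk (Suc k) \<omega>) \<partial>M)" for k
    unfolding g_def using \<open>n \<ge> 1\<close> by (rule integral_exp_mult_set_integral_gamma_density)
  with weighted_gamma_kernel_sums [where w = "\<lambda>_. 1" and F = F1, OF _ _ F1 \<open>mu > 0\<close> \<open>lam > 0\<close>]
       weighted_gamma_kernel_sums [where w = "\<lambda>k. real (Suc k)" and F = F2, OF _ _ F2 \<open>mu > 0\<close> \<open>lam > 0\<close>]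
  show ?thesis by (simp del: sum.lessThan_Suc)
qed

end
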